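(* There exists a non-empty Zariski open subset $\mathcal{U}$ of $\mathrm{GL}_2(\mathbb{C})^2$ such that for every Fibonacci sequence $(\mathbf{w}_i)_{i\ge0}$ in $\mathrm{GL}_2(\mathbb{C})$ with $(\mathbf{w}_0,\mathbf{w}_1)\in\mathcal{U}$ there exists $N\in\mathrm{GL}_2(\mathbb{C})$ such that the matrix $\mathbf{y}_i$, defined by $\mathbf{y}_i=\mathbf{w}_iN$ if $i$ is even and $\mathbf{y}_i=\mathbf{w}_i\,{}^tN$ if $i$ is odd, is symmetric for every $i\ge0$. Moreover, for any Fibonacci sequence $(\mathbf{w}_i)_{i\ge0}$ in $\mathrm{GL}_2(\mathbb{C})$, any $N\in\mathrm{GL}_2(\mathbb{C})$ such that $\mathbf{w}_0N$, $\mathbf{w}_1\,{}^tN$ and $\mathbf{w}_1\mathbf{w}_0N$ are symmetric has this property. Finally, when $(\mathbf{w}_0,\mathbf{w}_1)\in\mathcal{U}$ and $\mathbf{w}_0,\mathbf{w}_1$ have integer coefficients, such an $N$ may be chosen with integer coefficients.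
   Context: A Fibonacci sequence in a monoid is a sequence $(\mathbf{w}_i)_{i\ge0}$ with $\mathbf{w}_{i+2}=\mathbf{w}_{i+1}\mathbf{w}_i$ for all $i\ge0$. ${}^tN$ denotes the transpose of $N$. *)

theory Defs
  imports "HOL-Analysis.Analysis"
begin

type_synonym mat2 = "complex^2^2"

definition fibonacci_seq :: "(nat \<Rightarrow> mat2) \<Rightarrow> bool" where
  "fibonacci_seq w \<longleftrightarrow> (\<forall>i. w (i + 2) = w (i + 1) ** w i)"

definition in_GL2 :: "mat2 \<Rightarrow> bool" where
  "in_GL2 A \<longleftrightarrow> invertible A"

definition symmetric_mat :: "mat2 \<Rightarrow> bool" where
  "symmetric_mat A \<longleftrightarrow> transpose A = A"

definition integral_mat :: "mat2 \<Rightarrow> bool" where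
  "integral_mat A \<longleftrightarrow> (\<forall>i j. A $ i $ j \<in> \<int>)"

definition twisted_seq :: "(nat \<Rightarrow> mat2) \<Rightarrow> mat2 \<Rightarrow> nat \<Rightarrow> mat2" where
  "twisted_seq w N i = (if even i then w i ** N else w i ** transpose N)"

inductive_set pair_poly :: "(mat2 \<times> mat2 \<Rightarrow> complex) set" where
  const: "(\<lambda>_. c) \<in> pair_poly"
| coord1: "(\<lambda>p. fst p $ i $ j) \<in> pair_poly"
| coord2: "(\<lambda>p. snd p $ i $ j) \<in> pair_poly"
| add: "f \<in> pair_poly \<Longrightarrow> g \<in> pair_poly \<Longrightarrow> (\<lambda>p. f p + g p) \<in> pair_poly"
| mult: "f \<in> pair_poly \<Longrightarrow> g \<in> pair_poly \<Longrightarrow> (\<lambda>p. f p * g p) \<in> pair_poly"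

text \<open>Zariski open subsets of GL_2(C)^2: since GL_2(C)^2 is the principal open subset
  det(A) det(B) \<noteq> 0 of C^8, its Zariski open subsets are exactly the intersections of
  GL_2(C)^2 with complements of common zero sets of families of polynomials.\<close>
definition zariski_open_GL2sq :: "(mat2 \<times> mat2) set \<Rightarrow> bool" where
  "zariski_open_GL2sq U \<longleftrightarrow>
     (\<exists>F \<subseteq> pair_poly. U = {p. in_GL2 (fst p) \<and> in_GL2 (snd p) \<and> (\<exists>f\<in>F. f p \<noteq> 0)})"

end

theory Submission imports Defs begin

text \<open>Symmetry of \<open>X N\<close> and of \<open>X \<^sup>tN\<close> is a single linear condition on the four entries
  of \<open>N\<close>. The three conditions imposed by \<open>w\<^sub>0\<close>, \<open>w\<^sub>1\<close> and \<open>w\<^sub>1 w\<^sub>0\<close> are therefore satisfied by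
  the generalised cross product of their coefficient vectors in \<open>\<complex>\<^sup>4\<close>, whose entries are
  integer polynomials in the entries of \<open>w\<^sub>0, w\<^sub>1\<close>; \<open>\<U>\<close> is the locus where this \<open>N\<close> is
  invertible. Symmetry then propagates along the sequence because
  \<open>w (i + 3) = w (i + 1) w i w (i + 1)\<close>, and \<open>a N\<close>, \<open>b \<^sup>tN\<close> symmetric imply \<open>b a b \<^sup>tN\<close> symmetric.\<close>

lemma transpose_symmetric_sandwich:
  fixes a b M :: "'a::comm_semiring_1^'n^'n"
  assumes "transpose (a ** M) = a ** M" and "transpose (b ** transpose M) = b ** transpose M"
  shows "transpose (b ** a ** b ** transpose M) = b ** a ** b ** transpose M"
proof -
  have aM: "transpose M ** transpose a = a ** M"
    using assms(1) by (simp add: matrix_transpose_mul)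
  have bM: "M ** transpose b = b ** transpose M"
    using assms(2) by (simp add: matrix_transpose_mul)
  have "transpose (b ** a ** b ** transpose M) = M ** transpose b ** transpose a ** transpose b"
    by (simp add: matrix_transpose_mul matrix_mul_assoc)
  also have "\<dots> = b ** (transpose M ** transpose a) ** transpose b"
    using bM by (simp add: matrix_mul_assoc)
  also have "\<dots> = b ** a ** (M ** transpose b)"
    using aM by (simp add: matrix_mul_assoc)
  also have "\<dots> = b ** a ** b ** transpose M"
    using bM by (simp add: matrix_mul_assoc)
  finally show ?thesis .
qed

lemma fibonacci_seq_add3:
  assumes "fibonacci_seq w"
  shows "w (i + 3) = w (i + 1) ** w i ** w (i + 1)"
proof -
  have "w (i + 3) = w (i + 2) ** w (i + 1)"
    using assms[unfolded fibonacci_seq_def, rule_format, of "i + 1"] by (simp add: numeral_eq_Suc)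
  also have "\<dots> = w (i + 1) ** w i ** w (i + 1)"
    using assms unfolding fibonacci_seq_def by simp
  finally show ?thesis .
qed

lemma symmetric_twisted_seq:
  assumes fib: "fibonacci_seq w"
    and "symmetric_mat (w 0 ** N)" and "symmetric_mat (w 1 ** transpose N)"
    and "symmetric_mat (w 1 ** w 0 ** N)"
  shows "symmetric_mat (twisted_seq w N i)"
proof -
  have "symmetric_mat (twisted_seq w N i) \<and> symmetric_mat (twisted_seq w N (i + 1))
      \<and> symmetric_mat (twisted_seq w N (i + 2))"
  proof (induction i)
    case 0
    then show ?case
      using assms fib[unfolded fibonacci_seq_def, rule_format, of 0] by (simp add: twisted_seq_def)
  next
    case (Suc i)
    define M where "M = (if even i then N else transpose N)"
    have "transpose (w i ** M) = w i ** M"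
      and "transpose (w (i + 1) ** transpose M) = w (i + 1) ** transpose M"
      using Suc.IH by (auto simp: M_def symmetric_mat_def twisted_seq_def)
    then have "transpose (w (i + 1) ** w i ** w (i + 1) ** transpose M)
        = w (i + 1) ** w i ** w (i + 1) ** transpose M"
      by (rule transpose_symmetric_sandwich)
    then have "symmetric_mat (twisted_seq w N (i + 3))"
      by (simp add: M_def symmetric_mat_def twisted_seq_def fibonacci_seq_add3[OF fib]
          split: if_splits)
    then show ?case using Suc.IH by (simp add: numeral_eq_Suc)
  qed
  then show ?thesis by simp
qed

definition det3 :: "'a::comm_ring_1 \<Rightarrow> 'a \<Rightarrow> 'a \<Rightarrow> 'a \<Rightarrow> 'a \<Rightarrow> 'a \<Rightarrow> 'a \<Rightarrow> 'a \<Rightarrow> 'a \<Rightarrow> 'a" where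
  "det3 a b c d e f g h i = a * (e * i - f * h) - b * (d * i - f * g) + c * (d * h - e * g)"

text \<open>The cross product of \<open>r, s, t\<close>
  has as \<open>j\<close>-th entry the signed \<open>3 \<times> 3\<close> minor of the matrix with rows \<open>r, s, t\<close> obtained by
  deleting column \<open>j\<close>, so that \<open>inner4 x (cross4 r s t)\<close> is the determinant with rows
  \<open>x, r, s, t\<close>.\<close>
definition cross4 :: "(nat \<Rightarrow> 'a::comm_ring_1) \<Rightarrow> (nat \<Rightarrow> 'a) \<Rightarrow> (nat \<Rightarrow> 'a) \<Rightarrow> nat \<Rightarrow> 'a" where
  "cross4 r s t j =
    (if j = 0 then det3 (r 1) (r 2) (r 3) (s 1) (s 2) (s 3) (t 1) (t 2) (t 3)
     else if j = 1 then - det3 (r 0) (r 2) (r 3) (s 0) (s 2) (s 3) (t 0) (t 2) (t 3)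
     else if j = 2 then det3 (r 0) (r 1) (r 3) (s 0) (s 1) (s 3) (t 0) (t 1) (t 3)
     else - det3 (r 0) (r 1) (r 2) (s 0) (s 1) (s 2) (t 0) (t 1) (t 2))"

definition inner4 :: "(nat \<Rightarrow> 'a::comm_ring_1) \<Rightarrow> (nat \<Rightarrow> 'a) \<Rightarrow> 'a" where
  "inner4 x y = x 0 * y 0 + x 1 * y 1 + x 2 * y 2 + x 3 * y 3"

lemma inner4_cross4_eq_0:
  "inner4 r (cross4 r s t) = 0" "inner4 s (cross4 r s t) = 0" "inner4 t (cross4 r s t) = 0"
  by (simp_all add: inner4_def cross4_def det3_def algebra_simps)

text \<open>Stated pointwise so that it applies both to \<^const>\<open>pair_poly\<close> and, through constant
  functions, to \<open>\<int>\<close>.\<close>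
lemma cross4_closed:
  assumes add: "\<And>f g. f \<in> S \<Longrightarrow> g \<in> S \<Longrightarrow> (\<lambda>p. f p + g p) \<in> S"
    and mult: "\<And>f g. f \<in> S \<Longrightarrow> g \<in> S \<Longrightarrow> (\<lambda>p. f p * g p) \<in> S"
    and neg: "\<And>f. f \<in> S \<Longrightarrow> (\<lambda>p. - f p) \<in> S"
    and "\<And>k. (\<lambda>p. r p k) \<in> S" "\<And>k. (\<lambda>p. s p k) \<in> S" "\<And>k. (\<lambda>p. t p k) \<in> S"
  shows "(\<lambda>p. cross4 (r p) (s p) (t p) j) \<in> S"
proof -
  have det3: "(\<lambda>p. det3 (a p) (b p) (c p) (d p) (e p) (f p) (g p) (h p) (i p)) \<in> S"
    if "a \<in> S" "b \<in> S" "c \<in> S" "d \<in> S" "e \<in> S" "f \<in> S" "g \<in> S" "h \<in> S" "i \<in> S"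
    for a b c d e f g h i
    unfolding det3_def diff_conv_add_uminus using that by (intro add mult neg) auto
  show ?thesis
    unfolding cross4_def using assms(4-)
    by (cases "j = 0"; cases "j = 1"; cases "j = 2") (auto intro!: det3 neg)
qed

definition entries :: "mat2 \<Rightarrow> nat \<Rightarrow> complex" where
  "entries M j =
    (if j = 0 then M$1$1 else if j = 1 then M$1$2 else if j = 2 then M$2$1 else M$2$2)"

definition mat_of_entries :: "(nat \<Rightarrow> complex) \<Rightarrow> mat2" where
  "mat_of_entries v =
    (\<chi> i j. if i = 1 then (if j = 1 then v 0 else v 1) else (if j = 1 then v 2 else v 3))"

lemma inner4_entries_mat_of_entries: "inner4 x (entries (mat_of_entries v)) = inner4 x v"
  by (simp add: inner4_def entries_def mat_of_entries_def)

definition sym_coeffs :: "mat2 \<Rightarrow> nat \<Rightarrow> complex" where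
  "sym_coeffs X j =
    (if j = 0 then - X$2$1 else if j = 1 then X$1$1 else if j = 2 then - X$2$2 else X$1$2)"

definition sym_coeffs_transpose :: "mat2 \<Rightarrow> nat \<Rightarrow> complex" where
  "sym_coeffs_transpose X j =
    (if j = 0 then - X$2$1 else if j = 1 then - X$2$2 else if j = 2 then X$1$1 else X$1$2)"

lemma symmetric_mat_iff: "symmetric_mat M \<longleftrightarrow> M$1$2 = M$2$1"
  unfolding symmetric_mat_def vec_eq_iff forall_2 transpose_def by auto

lemma symmetric_mat_mult_iff:
  "symmetric_mat (X ** M) \<longleftrightarrow> inner4 (sym_coeffs X) (entries M) = 0"
  unfolding symmetric_mat_iff inner4_def sym_coeffs_def entries_def matrix_matrix_mult_def sum_2
  by (auto simp: algebra_simps)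

lemma symmetric_mat_mult_transpose_iff:
  "symmetric_mat (X ** transpose M) \<longleftrightarrow> inner4 (sym_coeffs_transpose X) (entries M) = 0"
  unfolding symmetric_mat_iff inner4_def sym_coeffs_transpose_def entries_def
    matrix_matrix_mult_def sum_2 transpose_def
  by (auto simp: algebra_simps)

definition symmetrizer :: "mat2 \<Rightarrow> mat2 \<Rightarrow> mat2" where
  "symmetrizer A B =
    mat_of_entries (cross4 (sym_coeffs A) (sym_coeffs_transpose B) (sym_coeffs (B ** A)))"

lemma symmetric_mult_symmetrizer:
  "symmetric_mat (A ** symmetrizer A B)"
  "symmetric_mat (B ** transpose (symmetrizer A B))"
  "symmetric_mat (B ** A ** symmetrizer A B)"
  by (simp_all only: symmetric_mat_mult_transpose_iff)
    (simp_all only: symmetric_mat_mult_iff symmetrizer_def inner4_entries_mat_of_entries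
      inner4_cross4_eq_0)

lemma symmetrizer_closed:
  assumes add: "\<And>f g. f \<in> S \<Longrightarrow> g \<in> S \<Longrightarrow> (\<lambda>p. f p + g p) \<in> S"
    and mult: "\<And>f g. f \<in> S \<Longrightarrow> g \<in> S \<Longrightarrow> (\<lambda>p. f p * g p) \<in> S"
    and neg: "\<And>f. f \<in> S \<Longrightarrow> (\<lambda>p. - f p) \<in> S"
    and A: "\<And>i j. (\<lambda>p. A p $ i $ j) \<in> S" and B: "\<And>i j. (\<lambda>p. B p $ i $ j) \<in> S"
  shows "(\<lambda>p. symmetrizer (A p) (B p) $ i $ j) \<in> S"
proof -
  have coeffs: "(\<lambda>p. sym_coeffs (X p) k) \<in> S" "(\<lambda>p. sym_coeffs_transpose (X p) k) \<in> S"
    if "\<And>i j. (\<lambda>p. X p $ i $ j) \<in> S" for X k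
    unfolding sym_coeffs_def sym_coeffs_transpose_def using that neg
    by (cases "k = 0"; cases "k = 1"; cases "k = 2"; simp)+
  have "(\<lambda>p. (B p ** A p) $ i $ j) \<in> S" for i j
    unfolding matrix_matrix_mult_def sum_2 vec_lambda_beta using A B by (intro add mult)
  then have "(\<lambda>p. cross4 (sym_coeffs (A p)) (sym_coeffs_transpose (B p))
      (sym_coeffs (B p ** A p)) k) \<in> S" for k
    using A B by (intro cross4_closed coeffs add mult neg)
  then show ?thesis
    by (cases "i = 1"; cases "j = 1") (simp_all add: symmetrizer_def mat_of_entries_def)
qed

lemma integral_mat_symmetrizer:
  assumes "integral_mat A" "integral_mat B"
  shows "integral_mat (symmetrizer A B)"
proof -
  have "(\<lambda>_::unit. symmetrizer A B $ i $ j) \<in> {f. \<forall>p. f p \<in> \<int>}" for i j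
    using assms by (intro symmetrizer_closed) (auto simp: integral_mat_def)
  then show ?thesis by (simp add: integral_mat_def)
qed

lemma pair_poly_det_symmetrizer: "(\<lambda>p. det (symmetrizer (fst p) (snd p))) \<in> pair_poly"
proof -
  have neg: "(\<lambda>p. - f p) \<in> pair_poly" if "f \<in> pair_poly" for f
    using pair_poly.mult[OF pair_poly.const[of "-1"] that] by simp
  have "(\<lambda>p. symmetrizer (fst p) (snd p) $ i $ j) \<in> pair_poly" for i j
    by (intro symmetrizer_closed pair_poly.add pair_poly.mult neg pair_poly.coord1 pair_poly.coord2)
  then show ?thesis
    unfolding det_2 diff_conv_add_uminus by (intro pair_poly.add pair_poly.mult neg)
qed

lemma invertible_symmetrizer_example:
  defines "A \<equiv> \<chi> i j. if i = 2 \<and> j = 1 then 0 else 1 :: mat2"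
    and "B \<equiv> \<chi> i j. if i = 1 \<and> j = 2 then 0 else 1 :: mat2"
  shows "invertible A \<and> invertible B \<and> invertible (symmetrizer A B)"
  by (simp add: invertible_det_nz A_def B_def det_2 symmetrizer_def mat_of_entries_def cross4_def
      det3_def sym_coeffs_def sym_coeffs_transpose_def matrix_matrix_mult_def sum_2)

theorem proposition3p1:
  shows "\<exists>U. zariski_open_GL2sq U \<and> U \<noteq> {} \<and>
    (\<forall>w. fibonacci_seq w \<and> (\<forall>i. in_GL2 (w i)) \<and> (w 0, w 1) \<in> U \<longrightarrow>
        (\<exists>N. in_GL2 N \<and> (\<forall>i. symmetric_mat (twisted_seq w N i)))) \<and>
    (\<forall>w N. fibonacci_seq w \<and> (\<forall>i. in_GL2 (w i)) \<and> in_GL2 N \<and>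
        symmetric_mat (w 0 ** N) \<and> symmetric_mat (w 1 ** transpose N) \<and>
        symmetric_mat (w 1 ** w 0 ** N) \<longrightarrow>
        (\<forall>i. symmetric_mat (twisted_seq w N i))) \<and>
    (\<forall>w. fibonacci_seq w \<and> (\<forall>i. in_GL2 (w i)) \<and> (w 0, w 1) \<in> U \<and>
        integral_mat (w 0) \<and> integral_mat (w 1) \<longrightarrow>
        (\<exists>N. in_GL2 N \<and> integral_mat N \<and> (\<forall>i. symmetric_mat (twisted_seq w N i))))"
proof -
  define U
    where "U = {p. in_GL2 (fst p) \<and> in_GL2 (snd p) \<and> in_GL2 (symmetrizer (fst p) (snd p))}"
  have "zariski_open_GL2sq U"
    unfolding zariski_open_GL2sq_def U_def in_GL2_def invertible_det_nz
    using pair_poly_det_symmetrizer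
    by (intro exI[of _ "{\<lambda>p. det (symmetrizer (fst p) (snd p))}"]) auto
  moreover have "U \<noteq> {}"
    using invertible_symmetrizer_example unfolding U_def in_GL2_def by fastforce
  moreover have "\<forall>i. symmetric_mat (twisted_seq w (symmetrizer (w 0) (w 1)) i)"
    if "fibonacci_seq w" for w
    using that by (intro allI symmetric_twisted_seq symmetric_mult_symmetrizer)
  moreover have "in_GL2 (symmetrizer (w 0) (w 1))" if "(w 0, w 1) \<in> U" for w
    using that by (simp add: U_def)
  ultimately show ?thesis
    using integral_mat_symmetrizer symmetric_twisted_seq by (intro exI[of _ U]) blast
qed

end
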